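(* Assume $\gamma=0$ and $L$ is not conformal. Let $I$ be a two-sided ideal of $L$; if $o(r)=n<\infty$, assume in addition that $\tilde\phi(h^n)-C\in I$ for some $C\in\mathbb C^\times$. Let $x\in I$ with homogeneous decomposition $x=\sum_{i\in\mathbb Z}x_i$, $x_i\in L_i$. Then there is an integer $m\ge0$ such that $x_ih^m\in I$ for all $i\in\mathbb Z$.
   Context: Let $r,s\in\mathbb C^\times$, $\phi(x)=\sum_i a_ix^i\in\mathbb C[x]$, and $L=L(\phi,r,s,0)$ the associative $\mathbb C$-algebra generated by $u,d,h$ with $hu=ruh$, $dh=rhd$, $du-sud=\phi(h)$; $L$ is $\mathbb Z$-graded by $\deg u=1,\deg d=-1,\deg h=0$, with components $L_i$. $L$ is conformal if there is $\psi\in\mathbb C[x]$ with $s\psi(x)-\psi(rx)=\phi(x)$; $L$ is not conformal iff $s=r^i$ and $a_i\neq0$ for some $i\ge0$. $o(r)$ is the multiplicative order of $r$. When $o(r)=n<\infty$ and $L$ is not conformal, fix $j$ with $s=r^j$, $0\le j\le n-1$, and write $\phi=\phi_0+\phi_1$ with $\phi_0(h)=\sum_{i\not\equiv j \ (\mathrm{mod}\ n)}a_ih^i$ and $\phi_1(h)=\sum_{i\equiv j\ (\mathrm{mod}\ n)}a_ih^i=sh^j\tilde\phi(h^n)$ for a polynomial $\tilde\phi$. When $o(r)=\infty$ there is a unique $j$ with $s=r^j$, and $\phi_1(h)=a_jh^j=sCh^j$, $C\neq0$, $\phi_0=\phi-\phi_1$. *)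

theory Defs
  imports Complex_Main "HOL-Computational_Algebra.Polynomial"
begin

text \<open>The free associative complex algebra on u, d, h: elements are finitely supported
  functions from words to coefficients; the down-up algebra L is its quotient by the ideal
  generated by the defining relations. Ideals of L are identified with ideals of the free
  algebra containing the relations.\<close>

datatype gen = U | D | H

type_synonym fa = "gen list \<Rightarrow> complex"

definition fin :: "fa \<Rightarrow> bool" where
  "fin f \<longleftrightarrow> finite {w. f w \<noteq> 0}"

definition fadd :: "fa \<Rightarrow> fa \<Rightarrow> fa" where
  "fadd f g = (\<lambda>w. f w + g w)"

definition fsub :: "fa \<Rightarrow> fa \<Rightarrow> fa" where
  "fsub f g = (\<lambda>w. f w - g w)"

definition fscale :: "complex \<Rightarrow> fa \<Rightarrow> fa" where
  "fscale c f = (\<lambda>w. c * f w)"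

definition fmul :: "fa \<Rightarrow> fa \<Rightarrow> fa" where
  "fmul f g = (\<lambda>w. \<Sum>k\<le>length w. f (take k w) * g (drop k w))"

definition mon :: "gen list \<Rightarrow> fa" where
  "mon v = (\<lambda>w. if w = v then 1 else 0)"

definition fone :: fa where "fone = mon []"

definition hpow :: "nat \<Rightarrow> fa" where
  "hpow m = mon (replicate m H)"

text \<open>Evaluation p(h^n) of a polynomial at the n-th power of h.\<close>
definition evalHpow :: "complex poly \<Rightarrow> nat \<Rightarrow> fa" where
  "evalHpow p n = (\<lambda>w. if (\<forall>g\<in>set w. g = H) \<and> n dvd length w
                        then coeff p (length w div n) else 0)"

definition evalH :: "complex poly \<Rightarrow> fa" where
  "evalH p = evalHpow p 1"

definition two_sided_ideal :: "fa set \<Rightarrow> bool" where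
  "two_sided_ideal I \<longleftrightarrow>
     (\<forall>x\<in>I. fin x) \<and> (\<lambda>w. 0) \<in> I \<and>
     (\<forall>x\<in>I. \<forall>y\<in>I. fadd x y \<in> I) \<and>
     (\<forall>x\<in>I. \<forall>a. fin a \<longrightarrow> fmul a x \<in> I \<and> fmul x a \<in> I)"

text \<open>Defining relations of L(phi, r, s, 0).\<close>
definition downup_rels :: "complex poly \<Rightarrow> complex \<Rightarrow> complex \<Rightarrow> fa set" where
  "downup_rels phi r s =
     { fsub (mon [H,U]) (fscale r (mon [U,H])),
       fsub (mon [D,H]) (fscale r (mon [H,D])),
       fsub (fsub (mon [D,U]) (fscale s (mon [U,D]))) (evalH phi) }"

definition downup_ideal :: "complex poly \<Rightarrow> complex \<Rightarrow> complex \<Rightarrow> fa set \<Rightarrow> bool" where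
  "downup_ideal phi r s I \<longleftrightarrow> two_sided_ideal I \<and> downup_rels phi r s \<subseteq> I"

definition wdeg :: "gen list \<Rightarrow> int" where
  "wdeg w = int (length (filter (\<lambda>g. g = U) w)) - int (length (filter (\<lambda>g. g = D) w))"

definition hcomp :: "int \<Rightarrow> fa \<Rightarrow> fa" where
  "hcomp i x = (\<lambda>w. if wdeg w = i then x w else 0)"

definition conformal :: "complex poly \<Rightarrow> complex \<Rightarrow> complex \<Rightarrow> bool" where
  "conformal phi r s \<longleftrightarrow> (\<exists>psi. smult s psi - pcompose psi [:0, r:] = phi)"

text \<open>phi-tilde: phi_1(h) = s h^j phitilde(h^n), i.e. coefficient k of phitilde is a_{j+kn}/s.\<close>
definition phi_tilde :: "complex poly \<Rightarrow> complex \<Rightarrow> nat \<Rightarrow> nat \<Rightarrow> complex poly" where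
  "phi_tilde phi s n j = Poly (map (\<lambda>k. coeff phi (j + k * n) / s) [0..<degree phi + 1])"

end

theory Submission
  imports Defs
begin

(* The proof rests on one separation principle (lemma eigen_separation): if an additive,
   J-preserving operator T acts on every homogeneous element y of degree i, up to J and
   up to right multiplication by a fixed element P, as the scalar lam i, and lam is
   injective, then for x \<in> J the Vandermonde determinant of the values lam i lets us
   isolate each component x_i * P^m \<in> J from the elements T^k(x) \<in> J.
   - If r is not a root of unity, T is left multiplication by h and P = h:
     h y = r^i y h for y of degree i (lemma hcomm_homogeneous).
   - If r has finite order n and s = r^j, the paper's element
     Z = (ud + psi(h)) h^(n-j), with psi chosen so that phi - s psi(h) + psi(rh) = phi_1,
     satisfies Z y = y Z + i C y h^n, using phi_tilde(h^n) \<approx> C; then T = [Z, -] and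
     P = h^n (lemma finite_order_case).
   Non-conformality of L guarantees s = r^j for some j (lemma nonconformal_power). *)

section \<open>The free algebra on u, d, h\<close>

text \<open>Associativity of the convolution product, by reindexing the double sum over
  splittings of a word into three pieces.\<close>
lemma fmul_assoc: "fmul (fmul f g) k = fmul f (fmul g k)"
proof
  fix w :: "gen list"
  define N where "N = length w"
  define F where "F l m = f (take l w) * g (take (m-l) (drop l w)) * k (drop m w)" for l m
  have lhs: "fmul (fmul f g) k w = (\<Sum>m\<le>N. \<Sum>l\<le>m. F l (l + (m - l)))"
    unfolding fmul_def F_def N_def
    by (auto simp: sum_distrib_right min_def drop_take intro!: sum.cong)
  have rhs: "fmul f (fmul g k) w = (\<Sum>l\<le>N. \<Sum>m\<le>N-l. F l (l+m))"
    unfolding fmul_def F_def N_def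
    by (auto simp: sum_distrib_left mult.assoc add.commute intro!: sum.cong)
  have "(\<Sum>(l,m)\<in>{(i,j). i+j \<le> N}. F l (l+m)) = (\<Sum>m\<le>N. \<Sum>l\<le>m. F l (l + (m - l)))"
    by (rule sum.triangle_reindex_eq)
  moreover have "{(i,j). i+j \<le> N} = Sigma {..N} (\<lambda>l. {..N-l})" by auto
  ultimately show "fmul (fmul f g) k w = fmul f (fmul g k) w"
    using lhs rhs by (simp add: sum.Sigma)
qed

lemma fin_fmul: assumes "fin f" "fin g" shows "fin (fmul f g)"
proof -
  have "{w. fmul f g w \<noteq> 0} \<subseteq> (\<lambda>(a,b). a @ b) ` ({w. f w \<noteq> 0} \<times> {w. g w \<noteq> 0})"
  proof
    fix w assume "w \<in> {w. fmul f g w \<noteq> 0}"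
    then obtain k where "f (take k w) * g (drop k w) \<noteq> 0"
      unfolding fmul_def by (auto elim: sum.not_neutral_contains_not_neutral)
    then show "w \<in> (\<lambda>(a,b). a @ b) ` ({w. f w \<noteq> 0} \<times> {w. g w \<noteq> 0})"
      by (auto intro!: image_eqI[where x="(take k w, drop k w)"])
  qed
  then show ?thesis using assms unfolding fin_def by (meson finite_SigmaI finite_imageI finite_subset)
qed

lemma fin_zero[simp]: "fin (\<lambda>w. 0)" by (simp add: fin_def)
lemma fin_mon[simp]: "fin (mon v)" by (simp add: fin_def mon_def)
lemma fin_fone[simp]: "fin fone" by (simp add: fone_def)
lemma fin_fadd[simp]: "fin f \<Longrightarrow> fin g \<Longrightarrow> fin (fadd f g)"
  unfolding fin_def fadd_def by (rule finite_subset[of _ "{w. f w \<noteq> 0} \<union> {w. g w \<noteq> 0}"]) auto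
lemma fin_fsub[simp]: "fin f \<Longrightarrow> fin g \<Longrightarrow> fin (fsub f g)"
  unfolding fin_def fsub_def by (rule finite_subset[of _ "{w. f w \<noteq> 0} \<union> {w. g w \<noteq> 0}"]) auto
lemma fin_fscale[simp]: "fin f \<Longrightarrow> fin (fscale c f)"
  unfolding fin_def fscale_def by (rule finite_subset[of _ "{w. f w \<noteq> 0}"]) auto
lemma fin_uminus[simp]: "fin f \<Longrightarrow> fin (\<lambda>w. - f w)"
  unfolding fin_def by simp

lemma fmul_fadd_left: "fmul (fadd f g) k = fadd (fmul f k) (fmul g k)"
  unfolding fmul_def fadd_def by (auto simp: distrib_right sum.distrib)
lemma fmul_fadd_right: "fmul k (fadd f g) = fadd (fmul k f) (fmul k g)"
  unfolding fmul_def fadd_def by (auto simp: distrib_left sum.distrib)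
lemma fmul_fscale_left: "fmul (fscale c f) k = fscale c (fmul f k)"
  unfolding fmul_def fscale_def by (auto simp: sum_distrib_left mult.assoc)
lemma fmul_fscale_right: "fmul k (fscale c f) = fscale c (fmul k f)"
  unfolding fmul_def fscale_def by (auto simp: sum_distrib_left mult_ac)

lemma fmul_mon_left:
  "fmul (mon a) g = (\<lambda>w. if take (length a) w = a then g (drop (length a) w) else 0)"
proof
  fix w :: "gen list"
  have "fmul (mon a) g w = (\<Sum>k\<le>length w. if k = length a \<and> take (length a) w = a
                                          then g (drop (length a) w) else 0)"
    unfolding fmul_def mon_def by (intro sum.cong) auto
  also have "\<dots> = (if take (length a) w = a then g (drop (length a) w) else 0)"
    by (cases "take (length a) w = a") (auto simp: sum.delta' dest: sym[where t=a])
  finally show "fmul (mon a) g w = \<dots>" .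
qed

lemma fmul_mon_mon: "fmul (mon a) (mon b) = mon (a @ b)"
  unfolding fmul_mon_left by (auto simp: mon_def fun_eq_iff) (metis append_take_drop_id)

lemma fmul_fone_left: "fmul fone f = f"
  unfolding fone_def fmul_mon_left by simp

lemma fmul_fone_right: "fmul f fone = f"
proof
  fix w :: "gen list"
  have "fmul f fone w = (\<Sum>k\<le>length w. if k = length w then f w else 0)"
    unfolding fmul_def fone_def mon_def by (intro sum.cong) auto
  then show "fmul f fone w = f w" by simp
qed

typedef free_alg = "{f::fa. fin f}" morphisms coeff_fn alg
  by (rule exI[of _ "\<lambda>w. 0"]) simp

setup_lifting type_definition_free_alg

instantiation free_alg :: ring_1
begin
lift_definition zero_free_alg :: free_alg is "\<lambda>w. 0" by simp
lift_definition one_free_alg :: free_alg is fone by simp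
lift_definition plus_free_alg :: "free_alg \<Rightarrow> free_alg \<Rightarrow> free_alg" is fadd by simp
lift_definition minus_free_alg :: "free_alg \<Rightarrow> free_alg \<Rightarrow> free_alg" is fsub by simp
lift_definition uminus_free_alg :: "free_alg \<Rightarrow> free_alg" is "\<lambda>f w. - f w" by simp
lift_definition times_free_alg :: "free_alg \<Rightarrow> free_alg \<Rightarrow> free_alg" is fmul by (rule fin_fmul)
instance
proof
  fix a b c :: free_alg
  show "a + b + c = a + (b + c)" by transfer (simp add: fadd_def add.assoc)
  show "a + b = b + a" by transfer (simp add: fadd_def add.commute)
  show "0 + a = a" by transfer (simp add: fadd_def)
  show "- a + a = 0" by transfer (simp add: fadd_def)
  show "a - b = a + - b" by transfer (simp add: fadd_def fsub_def)
  show "a * b * c = a * (b * c)" by transfer (rule fmul_assoc)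
  show "(a + b) * c = a * c + b * c" by transfer (rule fmul_fadd_left)
  show "a * (b + c) = a * b + a * c" by transfer (rule fmul_fadd_right)
  show "1 * a = a" by transfer (rule fmul_fone_left)
  show "a * 1 = a" by transfer (rule fmul_fone_right)
  show "(0::free_alg) \<noteq> 1" by transfer (simp add: fone_def mon_def fun_eq_iff)
qed
end

lift_definition smul :: "complex \<Rightarrow> free_alg \<Rightarrow> free_alg" is fscale by simp

lemma smul_mult_left[simp]: "smul c a * b = smul c (a * b)" by transfer (rule fmul_fscale_left)
lemma smul_mult_right[simp]: "a * smul c b = smul c (a * b)" by transfer (rule fmul_fscale_right)
lemma smul_smul[simp]: "smul c (smul d a) = smul (c * d) a"
  by transfer (simp add: fscale_def mult.assoc)
lemma smul_add[simp]: "smul c (a + b) = smul c a + smul c b"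
  by transfer (simp add: fscale_def fadd_def distrib_left)
lemma smul_diff[simp]: "smul c (a - b) = smul c a - smul c b"
  by transfer (simp add: fscale_def fsub_def right_diff_distrib)
lemma smul_one[simp]: "smul 1 a = a" by transfer (simp add: fscale_def)
lemma smul_zero[simp]: "smul 0 a = 0" by transfer (simp add: fscale_def)
lemma smul_zero_right[simp]: "smul c 0 = 0" by transfer (simp add: fscale_def)
lemma smul_add_left: "smul (c + d) a = smul c a + smul d a"
  by transfer (simp add: fscale_def fadd_def distrib_right)
lemma smul_diff_left: "smul (c - d) a = smul c a - smul d a"
  by transfer (simp add: fscale_def fsub_def left_diff_distrib)
lemma smul_uminus_left: "smul (- c) a = - smul c a" by transfer (simp add: fscale_def)
lemma smul_sum: "smul c (sum f S) = (\<Sum>i\<in>S. smul c (f i))"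
  by (induction S rule: infinite_finite_induct) auto

lemma coeff_fn_sum: "coeff_fn (sum f S) = (\<lambda>w. \<Sum>i\<in>S. coeff_fn (f i) w)"
  by (induction S rule: infinite_finite_induct)
     (auto simp: zero_free_alg.rep_eq plus_free_alg.rep_eq fadd_def)

lemma coeff_fn_smul: "coeff_fn (smul c a) = (\<lambda>w. c * coeff_fn a w)"
  by (simp add: smul.rep_eq fscale_def)

lift_definition wmon :: "gen list \<Rightarrow> free_alg" is mon by simp

abbreviation gen :: "gen \<Rightarrow> free_alg" where "gen g \<equiv> wmon [g]"

lemma wmon_Nil: "wmon [] = 1" by transfer (simp add: fone_def)
lemma wmon_append: "wmon (a @ b) = wmon a * wmon b" by transfer (simp add: fmul_mon_mon)
text \<open>Not a simp rule: it would loop on gen g = wmon [g].\<close>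
lemma wmon_Cons: "wmon (g # w) = gen g * wmon w" using wmon_append[of "[g]" w] by simp
lemma gen_H_power: "gen H ^ k = wmon (replicate k H)"
  by (induction k) (simp_all add: wmon_Nil wmon_Cons[of H "replicate _ H"])

section \<open>Supports and the Z-grading\<close>

definition supp :: "free_alg \<Rightarrow> gen list set" where "supp a = {w. coeff_fn a w \<noteq> 0}"

lemma finite_supp[simp]: "finite (supp a)"
  using coeff_fn[of a] by (simp add: supp_def fin_def)

lemma monomial_decomposition: "a = (\<Sum>w\<in>supp a. smul (coeff_fn a w) (wmon w))"
proof -
  have "coeff_fn (\<Sum>w\<in>supp a. smul (coeff_fn a w) (wmon w)) = coeff_fn a"
  proof
    fix v
    have "coeff_fn (\<Sum>w\<in>supp a. smul (coeff_fn a w) (wmon w)) v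
        = (\<Sum>w\<in>supp a. if v = w then coeff_fn a w else 0)"
      by (simp add: coeff_fn_sum coeff_fn_smul wmon.rep_eq mon_def if_distrib cong: if_cong)
    also have "\<dots> = (if v \<in> supp a then coeff_fn a v else 0)" by (simp add: sum.delta)
    also have "\<dots> = coeff_fn a v" by (simp add: supp_def)
    finally show "coeff_fn (\<Sum>w\<in>supp a. smul (coeff_fn a w) (wmon w)) v = coeff_fn a v" .
  qed
  then show ?thesis by (metis coeff_fn_inverse)
qed

lemma wdeg_append: "wdeg (a @ b) = wdeg a + wdeg b" by (simp add: wdeg_def)
lemma wdeg_Cons: "wdeg (g # w) = wdeg [g] + wdeg w" using wdeg_append[of "[g]" w] by simp
lemma wdeg_simps[simp]: "wdeg [U] = 1" "wdeg [D] = -1" "wdeg [H] = 0" "wdeg [] = 0"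
  by (simp_all add: wdeg_def)

definition homogeneous :: "int \<Rightarrow> free_alg \<Rightarrow> bool" where
  "homogeneous i a \<longleftrightarrow> (\<forall>w\<in>supp a. wdeg w = i)"

lemma homogeneous_wmon: "homogeneous (wdeg w) (wmon w)"
  by (simp add: homogeneous_def supp_def wmon.rep_eq mon_def)

lift_definition hc :: "int \<Rightarrow> free_alg \<Rightarrow> free_alg" is hcomp
  unfolding fin_def hcomp_def by (rule finite_subset[rotated]) auto

lemma homogeneous_hc: "homogeneous i (hc i a)"
  by (simp add: homogeneous_def supp_def hc.rep_eq hcomp_def)

lemma hc_decomposition: "a = (\<Sum>i\<in>wdeg ` supp a. hc i a)"
proof -
  have "coeff_fn (\<Sum>i\<in>wdeg ` supp a. hc i a) = coeff_fn a"
  proof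
    fix v
    have "coeff_fn (\<Sum>i\<in>wdeg ` supp a. hc i a) v
        = (\<Sum>i\<in>wdeg ` supp a. if wdeg v = i then coeff_fn a v else 0)"
      by (simp add: coeff_fn_sum hc.rep_eq hcomp_def)
    also have "\<dots> = (if wdeg v \<in> wdeg ` supp a then coeff_fn a v else 0)"
      by (simp add: sum.delta')
    also have "\<dots> = coeff_fn a v" by (auto simp: supp_def)
    finally show "coeff_fn (\<Sum>i\<in>wdeg ` supp a. hc i a) v = coeff_fn a v" .
  qed
  then show ?thesis by (metis coeff_fn_inverse)
qed

lemma hc_outside: "i \<notin> wdeg ` supp a \<Longrightarrow> hc i a = 0"
  by (rule coeff_fn_inject[THEN iffD1])
     (auto simp: hc.rep_eq hcomp_def supp_def zero_free_alg.rep_eq fun_eq_iff image_iff)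

section \<open>Two-sided ideals and congruence modulo an ideal\<close>

locale ring_ideal =
  fixes J :: "'a::ring_1 set"
  assumes zero_mem: "0 \<in> J"
    and add_mem: "x \<in> J \<Longrightarrow> y \<in> J \<Longrightarrow> x + y \<in> J"
    and mult_left_mem: "x \<in> J \<Longrightarrow> a * x \<in> J"
    and mult_right_mem: "x \<in> J \<Longrightarrow> x * a \<in> J"
begin

definition cong :: "'a \<Rightarrow> 'a \<Rightarrow> bool" (infix "\<approx>" 50) where
  "a \<approx> b \<longleftrightarrow> a - b \<in> J"

lemma neg_mem: "x \<in> J \<Longrightarrow> - x \<in> J"
  using mult_left_mem[of x "- 1"] by simp

lemma diff_mem: "x \<in> J \<Longrightarrow> y \<in> J \<Longrightarrow> x - y \<in> J"
  using add_mem[of x "- y"] neg_mem by simp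

lemma sum_mem: "(\<And>i. i \<in> S \<Longrightarrow> f i \<in> J) \<Longrightarrow> sum f S \<in> J"
  by (induction S rule: infinite_finite_induct) (auto simp: zero_mem add_mem)

lemma cong_refl[simp]: "a \<approx> a" by (simp add: cong_def zero_mem)

lemma cong_sym: "a \<approx> b \<Longrightarrow> b \<approx> a"
  unfolding cong_def using neg_mem by fastforce

lemma cong_trans[trans]: "a \<approx> b \<Longrightarrow> b \<approx> c \<Longrightarrow> a \<approx> c"
  unfolding cong_def using add_mem by fastforce

lemma cong_add: "a \<approx> b \<Longrightarrow> c \<approx> e \<Longrightarrow> a + c \<approx> b + e"
  unfolding cong_def using add_mem by (metis add_diff_add)

lemma cong_diff: assumes "a \<approx> b" "c \<approx> e" shows "a - c \<approx> b - e"
proof -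
  have "(a - b) - (c - e) \<in> J" using assms diff_mem by (simp add: cong_def)
  moreover have "(a - c) - (b - e) = (a - b) - (c - e)" by (simp add: algebra_simps)
  ultimately show ?thesis by (simp only: cong_def)
qed

lemma cong_mult_left: "a \<approx> b \<Longrightarrow> c * a \<approx> c * b"
  unfolding cong_def using mult_left_mem by (metis right_diff_distrib)

lemma cong_mult_right: "a \<approx> b \<Longrightarrow> a * c \<approx> b * c"
  unfolding cong_def using mult_right_mem by (metis left_diff_distrib)

lemma cong_sum: "(\<And>i. i \<in> S \<Longrightarrow> f i \<approx> g i) \<Longrightarrow> sum f S \<approx> sum g S"
  by (induction S rule: infinite_finite_induct) (auto intro: cong_add)

lemma cong_mem: "a \<approx> b \<Longrightarrow> a \<in> J \<Longrightarrow> b \<in> J"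
  unfolding cong_def using diff_mem by fastforce

lemma cong_commute_power: "a * c \<approx> c * a \<Longrightarrow> a ^ k * c \<approx> c * a ^ k"
proof (induction k)
  case (Suc k)
  have "a ^ Suc k * c = a * (a ^ k * c)" by (simp add: mult.assoc)
  also have "\<dots> \<approx> a * (c * a ^ k)" by (rule cong_mult_left[OF Suc.IH[OF Suc.prems]])
  also have "\<dots> = (a * c) * a ^ k" by (simp add: mult.assoc)
  also have "\<dots> \<approx> (c * a) * a ^ k" by (rule cong_mult_right[OF Suc.prems])
  also have "\<dots> = c * a ^ Suc k" by (simp add: mult.assoc power_commutes)
  finally show ?case .
qed simp

end

locale alg_ideal = ring_ideal J for J :: "free_alg set"
begin

lemma smul_mem: "x \<in> J \<Longrightarrow> smul c x \<in> J"
  using mult_left_mem[of x "smul c 1"] by simp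

lemma cong_smul: "a \<approx> b \<Longrightarrow> smul c a \<approx> smul c b"
  unfolding cong_def using smul_mem by (metis smul_diff)

lemma cong_homogeneous:
  assumes "homogeneous i y" and "\<And>w. wdeg w = i \<Longrightarrow> X * wmon w \<approx> wmon w * Y"
  shows "X * y \<approx> y * Y"
proof -
  have "X * y = (\<Sum>w\<in>supp y. smul (coeff_fn y w) (X * wmon w))"
    by (subst monomial_decomposition[of y]) (simp add: sum_distrib_left)
  also have "\<dots> \<approx> (\<Sum>w\<in>supp y. smul (coeff_fn y w) (wmon w * Y))"
    using assms by (intro cong_sum cong_smul) (auto simp: homogeneous_def)
  also have "\<dots> = y * Y"
    by (subst (2) monomial_decomposition[of y]) (simp add: sum_distrib_right)
  finally show ?thesis .
qed

lemma vandermonde_mem: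
  assumes "finite S" "inj_on lam S"
    and "\<And>k. k < card S \<Longrightarrow> (\<Sum>i\<in>S. smul (lam i ^ k) (y i)) \<in> J"
    and "i \<in> S"
  shows "y i \<in> J"
  using assms
proof (induction S arbitrary: y i rule: finite_induct)
  case (insert a F)
  define y' where "y' i = smul (lam i - lam a) (y i)" for i
  have "(\<Sum>i\<in>F. smul (lam i ^ k) (y' i)) \<in> J" if k: "k < card F" for k
  proof -
    have "(\<Sum>i\<in>insert a F. smul (lam i ^ Suc k) (y i))
          - smul (lam a) (\<Sum>i\<in>insert a F. smul (lam i ^ k) (y i)) \<in> J"
      using insert.prems(2)[of "Suc k"] insert.prems(2)[of k] k insert.hyps
      by (intro diff_mem smul_mem) simp_all
    also have "(\<Sum>i\<in>insert a F. smul (lam i ^ Suc k) (y i))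
          - smul (lam a) (\<Sum>i\<in>insert a F. smul (lam i ^ k) (y i))
        = (\<Sum>i\<in>insert a F. smul (lam i ^ Suc k - lam a * lam i ^ k) (y i))"
      by (simp add: smul_sum sum_subtractf[symmetric] smul_diff_left)
    also have "\<dots> = (\<Sum>i\<in>F. smul (lam i ^ k) (y' i))"
      using insert.hyps by (simp add: y'_def algebra_simps)
    finally show ?thesis .
  qed
  then have y'_mem: "y' i \<in> J" if "i \<in> F" for i
    using insert.IH[of y' i] insert.prems(1) that by (auto simp: inj_on_def)
  have yF: "y i \<in> J" if i: "i \<in> F" for i
  proof -
    have "lam i \<noteq> lam a" using insert i by (auto simp: inj_on_def)
    then have "y i = smul (inverse (lam i - lam a)) (y' i)" by (simp add: y'_def)
    then show ?thesis using y'_mem[OF i] smul_mem by simp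
  qed
  have "y a + (\<Sum>i\<in>F. y i) \<in> J"
    using insert.prems(2)[of 0] insert.hyps by simp
  then have "y a \<in> J" using diff_mem[OF _ sum_mem[OF yF]] by fastforce
  then show ?case using insert.prems(3) yF by auto
qed simp

text \<open>T is additive, linear and preserves J; on a homogeneous
  element y of degree i it acts, modulo J, as the scalar lam i followed by right
  multiplication with P. Iterating T on x = sum_i x_i and applying the Vandermonde argument
  separates the components: x_i * P^m \<in> J for all i, where m is the number of components.\<close>
lemma eigen_separation:
  fixes T :: "free_alg \<Rightarrow> free_alg" and lam :: "int \<Rightarrow> complex"
  assumes T_add: "\<And>a b. T (a + b) = T a + T b"
    and T_smul: "\<And>c a. T (smul c a) = smul c (T a)"
    and T_mem: "\<And>a. a \<in> J \<Longrightarrow> T a \<in> J"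
    and T_eigen: "\<And>i y k. homogeneous i y \<Longrightarrow> T (y * P ^ k) \<approx> smul (lam i) (y * P ^ Suc k)"
    and lam_inj: "inj lam"
    and x: "x \<in> J"
  shows "hc i x * P ^ card (wdeg ` supp x) \<in> J"
proof -
  define S where "S = wdeg ` supp x"
  define N where "N = card S"
  have T_sum: "T (sum f A) = (\<Sum>a\<in>A. T (f a))" for f and A :: "'b set"
  proof (induction A rule: infinite_finite_induct)
    case (infinite A)
    have "T 0 = T 0 + T 0" using T_add[of 0 0] by simp
    then show ?case using infinite by simp
  next
    case empty
    have "T 0 = T 0 + T 0" using T_add[of 0 0] by simp
    then show ?case by simp
  qed (simp add: T_add)
  have T_cong: "T a \<approx> T b" if "a \<approx> b" for a b
  proof -
    have "T a - T b = T (a - b)" using T_add[of "a - b" b] by simp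
    then show ?thesis using T_mem that by (simp add: cong_def)
  qed
  have iterate: "(T ^^ k) x \<approx> (\<Sum>i\<in>S. smul (lam i ^ k) (hc i x * P ^ k))" for k
  proof (induction k)
    case 0
    show ?case by (simp flip: hc_decomposition add: S_def)
  next
    case (Suc k)
    have "(T ^^ Suc k) x \<approx> T (\<Sum>i\<in>S. smul (lam i ^ k) (hc i x * P ^ k))"
      using T_cong[OF Suc.IH] by simp
    also have "\<dots> = (\<Sum>i\<in>S. smul (lam i ^ k) (T (hc i x * P ^ k)))"
      by (simp add: T_sum T_smul)
    also have "\<dots> \<approx> (\<Sum>i\<in>S. smul (lam i ^ k) (smul (lam i) (hc i x * P ^ Suc k)))"
      by (intro cong_sum cong_smul T_eigen homogeneous_hc)
    finally show ?case by (simp add: mult.commute)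
  qed
  have power_sums: "(\<Sum>i\<in>S. smul (lam i ^ k) (hc i x * P ^ N)) \<in> J" if "k < N" for k
  proof -
    have P_split: "P ^ k * P ^ (N - k) = P ^ N" using that by (simp flip: power_add)
    have "(T ^^ k) x * P ^ (N - k) \<in> J"
      using x T_mem by (intro mult_right_mem) (induction k, auto)
    moreover have "(T ^^ k) x * P ^ (N - k)
                   \<approx> (\<Sum>i\<in>S. smul (lam i ^ k) (hc i x * P ^ k)) * P ^ (N - k)"
      by (rule cong_mult_right[OF iterate])
    ultimately show ?thesis using cong_mem by (simp add: sum_distrib_right mult.assoc P_split)
  qed
  show ?thesis
  proof (cases "i \<in> S")
    case True
    show ?thesis using vandermonde_mem[OF _ _ power_sums True] lam_inj
      by (simp add: N_def S_def inj_on_def)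
  next
    case False
    then show ?thesis using hc_outside zero_mem by (simp add: S_def)
  qed
qed

end

section \<open>Commuting h past homogeneous elements\<close>

lemma power_int_inj:
  fixes r :: "'a::field"
  assumes "r \<noteq> 0" and not_root: "\<forall>n>0. r ^ n \<noteq> 1"
  shows "inj (\<lambda>i::int. r powi i)"
proof (rule injI)
  fix i i' :: int assume eq: "r powi i = r powi i'"
  have "r ^ nat \<bar>i - i'\<bar> = 1"
  proof (cases "i' \<le> i")
    case True
    have "r powi (i - i') = 1" using eq assms(1) by (simp add: power_int_diff)
    then show ?thesis using True by (simp add: power_int_def)
  next
    case False
    have "r powi (i' - i) = 1" using eq assms(1) by (simp add: power_int_diff)
    then show ?thesis using False by (simp add: power_int_def)
  qed
  then have "nat \<bar>i - i'\<bar> = 0" using not_root by (metis neq0_conv)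
  then show "i = i'" by simp
qed

locale twisted_h = alg_ideal J for J :: "free_alg set" +
  fixes r :: complex
  assumes r_nonzero: "r \<noteq> 0"
    and rel_hu: "gen H * gen U \<approx> smul r (gen U * gen H)"
    and rel_dh: "gen D * gen H \<approx> smul r (gen H * gen D)"
begin

lemma hcomm_gen: "gen H * gen g \<approx> smul (r powi wdeg [g]) (gen g * gen H)"
proof (cases g)
  case D
  have "- inverse r * r = -1" using r_nonzero by simp
  then have E: "gen H * gen D - smul (r powi wdeg [D]) (gen D * gen H)
              = smul (- inverse r) (gen D * gen H - smul r (gen H * gen D))"
    by (simp add: power_int_minus smul_uminus_left)
  have "smul (- inverse r) (gen D * gen H - smul r (gen H * gen D)) \<in> J"
    using rel_dh by (intro smul_mem) (simp add: cong_def)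
  then show ?thesis unfolding D cong_def E .
qed (use rel_hu in simp_all)

lemma hcomm_wmon: "gen H * wmon w \<approx> smul (r powi wdeg w) (wmon w * gen H)"
proof (induction w)
  case (Cons g w)
  have "gen H * wmon (g # w) = (gen H * gen g) * wmon w" by (simp add: wmon_Cons[of g w] mult.assoc)
  also have "\<dots> \<approx> smul (r powi wdeg [g]) (gen g * gen H) * wmon w"
    by (rule cong_mult_right[OF hcomm_gen])
  also have "\<dots> = smul (r powi wdeg [g]) (gen g * (gen H * wmon w))" by (simp add: mult.assoc)
  also have "\<dots> \<approx> smul (r powi wdeg [g]) (gen g * smul (r powi wdeg w) (wmon w * gen H))"
    by (rule cong_smul[OF cong_mult_left[OF Cons.IH]])
  also have "\<dots> = smul (r powi wdeg (g # w)) (wmon (g # w) * gen H)"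
    using r_nonzero by (simp add: wmon_Cons[of g w] mult.assoc wdeg_Cons[of g w] power_int_add)
  finally show ?case .
qed (simp add: wmon_Nil)

lemma hcomm_homogeneous:
  assumes "homogeneous i y" shows "gen H * y \<approx> smul (r powi i) (y * gen H)"
proof -
  have "gen H * y \<approx> y * smul (r powi i) (gen H)"
    using assms by (rule cong_homogeneous) (use hcomm_wmon in fastforce)
  then show ?thesis by simp
qed

lemma hcomm_power: "homogeneous i y \<Longrightarrow> gen H ^ k * y \<approx> smul ((r powi i) ^ k) (y * gen H ^ k)"
proof (induction k)
  case (Suc k)
  have "gen H ^ Suc k * y = gen H * (gen H ^ k * y)" by (simp add: mult.assoc)
  also have "\<dots> \<approx> gen H * smul ((r powi i) ^ k) (y * gen H ^ k)"
    by (rule cong_mult_left[OF Suc.IH[OF Suc.prems]])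
  also have "\<dots> = smul ((r powi i) ^ k) ((gen H * y) * gen H ^ k)" by (simp add: mult.assoc)
  also have "\<dots> \<approx> smul ((r powi i) ^ k) (smul (r powi i) (y * gen H) * gen H ^ k)"
    by (rule cong_smul[OF cong_mult_right[OF hcomm_homogeneous[OF Suc.prems]]])
  also have "\<dots> = smul ((r powi i) ^ Suc k) (y * gen H ^ Suc k)"
    by (simp add: mult.assoc mult.commute power_commutes)
  finally show ?case .
qed simp

text \<open>Case o(r) = infinity: left multiplication by h has eigenvalue r^i on the component
  of degree i, and these eigenvalues are distinct.\<close>
lemma infinite_order_case:
  assumes "\<forall>n>0. r ^ n \<noteq> 1" and "x \<in> J"
  shows "\<exists>m. \<forall>i. hc i x * gen H ^ m \<in> J"
proof -
  have "hc i x * gen H ^ card (wdeg ` supp x) \<in> J" for i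
  proof (rule eigen_separation[where T = "\<lambda>a. gen H * a" and lam = "\<lambda>i. r powi i"])
    fix i y k assume "homogeneous i y"
    then show "gen H * (y * gen H ^ k) \<approx> smul (r powi i) (y * gen H ^ Suc k)"
      using cong_mult_right[OF hcomm_homogeneous, of i y "gen H ^ k"]
      by (simp add: mult.assoc)
  qed (use assms r_nonzero power_int_inj mult_left_mem in \<open>simp_all add: distrib_left\<close>)
  then show ?thesis by blast
qed

end

section \<open>The case of a root of unity\<close>

definition poly_h :: "complex poly \<Rightarrow> free_alg" where
  "poly_h p = (\<Sum>k\<le>degree p. smul (coeff p k) (gen H ^ k))"

lemma power_inj_below_order:
  fixes r :: "'a::field"
  assumes minimal: "\<forall>k. 0 < k \<and> k < n \<longrightarrow> r ^ k \<noteq> 1" and "r \<noteq> 0"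
    and "a < n" "b < n" "r ^ a = r ^ b"
  shows "a = b"
proof -
  have no_gap: False if "a < b" "b < n" "r ^ a = r ^ b" for a b
  proof -
    have "r ^ a * r ^ (b - a) = r ^ b" using \<open>a < b\<close> by (simp flip: power_add)
    also have "\<dots> = r ^ a * 1" using \<open>r ^ a = r ^ b\<close> by simp
    finally have "r ^ (b - a) = 1" using \<open>r \<noteq> 0\<close> by simp
    then show False using minimal that by auto
  qed
  show ?thesis
    using no_gap[of a b] no_gap[of b a] assms(3-5) by (metis linorder_neqE_nat)
qed

locale finite_order = twisted_h J r for J r +
  fixes s :: complex and phi :: "complex poly" and n j :: nat and C :: complex
  assumes n_pos: "n > 0" and r_order: "r ^ n = 1"
    and r_order_minimal: "\<forall>k. 0 < k \<and> k < n \<longrightarrow> r ^ k \<noteq> 1"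
    and j_less: "j < n" and s_eq: "s = r ^ j" and C_nonzero: "C \<noteq> 0"
    and rel_du: "gen D * gen U \<approx> smul s (gen U * gen D) + poly_h phi"
    and phi_tilde_C:
      "(\<Sum>m\<le>degree phi. smul (coeff phi (j + m * n) / s) (gen H ^ (m * n))) \<approx> smul C 1"
begin

text \<open>Split phi = phi_0 + phi_1 by the residue of the exponent modulo n; psi solves
  s psi(x) - psi(r x) = phi_0(x), which is possible since s \<noteq> r^k off the residue j.\<close>
definition "K0 = {k. k \<le> degree phi \<and> k mod n \<noteq> j}"
definition "K1 = {k. k \<le> degree phi \<and> k mod n = j}"
definition "psi_coeff k = coeff phi k / (s - r ^ k)"
definition "psi_h = (\<Sum>k\<in>K0. smul (psi_coeff k) (gen H ^ k))"
definition "psi_rh = (\<Sum>k\<in>K0. smul (psi_coeff k * r ^ k) (gen H ^ k))"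
definition "phi1_h = (\<Sum>k\<in>K1. smul (coeff phi k) (gen H ^ k))"

text \<open>The element Z of the paper; it commutes with h and shifts u, d by multiples of h^n.\<close>
definition "W = gen U * gen D + psi_h"
definition "Z = W * gen H ^ (n - j)"

lemma s_nonzero: "s \<noteq> 0" using s_eq r_nonzero by simp

lemma s_ne_power: assumes "k mod n \<noteq> j" shows "s \<noteq> r ^ k"
proof
  assume "s = r ^ k"
  have "r ^ k = r ^ (n * (k div n) + k mod n)" by simp
  also have "\<dots> = (r ^ n) ^ (k div n) * r ^ (k mod n)" by (simp only: power_add power_mult)
  finally have "r ^ (k mod n) = r ^ j" using \<open>s = r ^ k\<close> s_eq r_order by simp
  then have "k mod n = j"
    using n_pos j_less by (intro power_inj_below_order[OF r_order_minimal r_nonzero]) auto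
  with assms show False by simp
qed

lemma phi_decomposition: "poly_h phi + psi_rh = phi1_h + smul s psi_h"
proof -
  have split: "{..degree phi} = K0 \<union> K1" "K0 \<inter> K1 = {}" "finite K0" "finite K1"
    by (auto simp: K0_def K1_def)
  have "poly_h phi = (\<Sum>k\<in>K0. smul (coeff phi k) (gen H ^ k)) + phi1_h"
    unfolding poly_h_def phi1_h_def split(1) using split by (intro sum.union_disjoint) auto
  moreover have "psi_rh - smul s psi_h = (\<Sum>k\<in>K0. smul (- coeff phi k) (gen H ^ k))"
  proof -
    have "psi_rh - smul s psi_h = (\<Sum>k\<in>K0. smul (psi_coeff k * r ^ k - s * psi_coeff k) (gen H ^ k))"
      by (simp add: psi_rh_def psi_h_def smul_sum sum_subtractf[symmetric] smul_diff_left)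
    also have "\<dots> = (\<Sum>k\<in>K0. smul (- coeff phi k) (gen H ^ k))"
    proof (intro sum.cong refl)
      fix k assume "k \<in> K0"
      then have "s - r ^ k \<noteq> 0" using s_ne_power by (simp add: K0_def)
      have "psi_coeff k * r ^ k - s * psi_coeff k = - (psi_coeff k * (s - r ^ k))"
        by (simp add: algebra_simps)
      also have "\<dots> = - coeff phi k" using \<open>s - r ^ k \<noteq> 0\<close> by (simp add: psi_coeff_def)
      finally have "psi_coeff k * r ^ k - s * psi_coeff k = - coeff phi k" .
      then show "smul (psi_coeff k * r ^ k - s * psi_coeff k) (gen H ^ k)
               = smul (- coeff phi k) (gen H ^ k)" by simp
    qed
    finally show ?thesis .
  qed
  ultimately show ?thesis by (simp add: smul_uminus_left sum_negf algebra_simps)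
qed

text \<open>phi_1(h) = s h^j phi_tilde(h^n), hence phi_1(h) = s C h^j modulo the ideal.\<close>
lemma phi1_cong: "phi1_h \<approx> smul (s * C) (gen H ^ j)"
proof -
  define g where "g k = smul (coeff phi k) (gen H ^ k)" for k
  have inj: "inj_on (\<lambda>m. j + m * n) {..degree phi}" using n_pos by (auto simp: inj_on_def)
  have K1_sub: "K1 \<subseteq> (\<lambda>m. j + m * n) ` {..degree phi}"
  proof
    fix k assume k: "k \<in> K1"
    then have "k = j + (k div n) * n" "k div n \<le> degree phi"
      using div_mult_mod_eq[of k n] order_trans[OF div_le_dividend[of k n]] by (auto simp: K1_def)
    then show "k \<in> (\<lambda>m. j + m * n) ` {..degree phi}" by blast
  qed
  have "smul s (gen H ^ j * (\<Sum>m\<le>degree phi. smul (coeff phi (j + m * n) / s) (gen H ^ (m * n))))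
      = (\<Sum>k\<in>(\<lambda>m. j + m * n) ` {..degree phi}. g k)"
    using s_nonzero by (simp add: g_def sum_distrib_left smul_sum power_add sum.reindex[OF inj])
  also have "\<dots> = (\<Sum>k\<in>K1. g k)"
  proof (rule sum.mono_neutral_right[OF _ K1_sub])
    show "\<forall>i\<in>(\<lambda>m. j + m * n) ` {..degree phi} - K1. g i = 0"
    proof
      fix i assume i: "i \<in> (\<lambda>m. j + m * n) ` {..degree phi} - K1"
      then have "i mod n = j" using j_less by auto
      then have "degree phi < i" using i by (auto simp: K1_def)
      then show "g i = 0" by (simp add: g_def coeff_eq_0)
    qed
  qed simp
  also have "\<dots> = phi1_h" by (simp add: phi1_h_def g_def)
  finally have "phi1_h = smul s (gen H ^ j *
      (\<Sum>m\<le>degree phi. smul (coeff phi (j + m * n) / s) (gen H ^ (m * n))))"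
    by (rule sym)
  also have "\<dots> \<approx> smul s (gen H ^ j * smul C 1)"
    by (intro cong_smul cong_mult_left phi_tilde_C)
  finally show ?thesis by simp
qed

lemma hpower_u: "gen H ^ k * gen U \<approx> smul (r ^ k) (gen U * gen H ^ k)"
  using hcomm_power[OF homogeneous_wmon[of "[U]"], of k] by simp

lemma d_hpower: "gen D * gen H ^ k \<approx> smul (r ^ k) (gen H ^ k * gen D)"
proof -
  have hk_d: "gen H ^ k * gen D \<approx> smul (inverse r ^ k) (gen D * gen H ^ k)"
    using hcomm_power[OF homogeneous_wmon[of "[D]"], of k] by (simp add: power_int_minus)
  have "gen D * gen H ^ k = smul (r ^ k) (smul (inverse r ^ k) (gen D * gen H ^ k))"
    using r_nonzero by (simp flip: power_mult_distrib)
  also have "\<dots> \<approx> smul (r ^ k) (gen H ^ k * gen D)"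
    by (intro cong_smul cong_sym[OF hk_d])
  finally show ?thesis .
qed

lemma psi_u: "psi_h * gen U \<approx> gen U * psi_rh"
proof -
  have "psi_h * gen U = (\<Sum>k\<in>K0. smul (psi_coeff k) (gen H ^ k * gen U))"
    by (simp add: psi_h_def sum_distrib_right)
  also have "\<dots> \<approx> (\<Sum>k\<in>K0. smul (psi_coeff k) (smul (r ^ k) (gen U * gen H ^ k)))"
    by (intro cong_sum cong_smul hpower_u)
  also have "\<dots> = gen U * psi_rh" by (simp add: psi_rh_def sum_distrib_left mult.commute)
  finally show ?thesis .
qed

lemma d_psi: "gen D * psi_h \<approx> psi_rh * gen D"
proof -
  have "gen D * psi_h = (\<Sum>k\<in>K0. smul (psi_coeff k) (gen D * gen H ^ k))"
    by (simp add: psi_h_def sum_distrib_left)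
  also have "\<dots> \<approx> (\<Sum>k\<in>K0. smul (psi_coeff k) (smul (r ^ k) (gen H ^ k * gen D)))"
    by (intro cong_sum cong_smul d_hpower)
  also have "\<dots> = psi_rh * gen D" by (simp add: psi_rh_def sum_distrib_right mult.commute)
  finally show ?thesis .
qed

text \<open>With W = ud + psi(h): W u = u (s W + s C h^j), d W = (s W + s C h^j) d, W h = h W.
  The correction phi_1 left over by psi is replaced by s C h^j via phi1_cong.\<close>
lemma W_u: "W * gen U \<approx> gen U * (smul s W + smul (s * C) (gen H ^ j))"
proof -
  have "W * gen U = gen U * (gen D * gen U) + psi_h * gen U"
    unfolding W_def by (simp only: distrib_right mult.assoc)
  also have "\<dots> \<approx> gen U * (smul s (gen U * gen D) + poly_h phi) + gen U * psi_rh"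
    using rel_du psi_u by (intro cong_add cong_mult_left)
  also have "\<dots> = gen U * (smul s (gen U * gen D) + (poly_h phi + psi_rh))"
    by (simp add: distrib_left add.assoc)
  also have "\<dots> = gen U * (smul s W + phi1_h)"
    unfolding phi_decomposition by (simp add: W_def add_ac)
  also have "\<dots> \<approx> gen U * (smul s W + smul (s * C) (gen H ^ j))"
    by (intro cong_mult_left cong_add cong_refl phi1_cong)
  finally show ?thesis .
qed

lemma d_W: "gen D * W \<approx> (smul s W + smul (s * C) (gen H ^ j)) * gen D"
proof -
  have "gen D * W = (gen D * gen U) * gen D + gen D * psi_h"
    unfolding W_def by (simp only: distrib_left mult.assoc)
  also have "\<dots> \<approx> (smul s (gen U * gen D) + poly_h phi) * gen D + psi_rh * gen D"
    using rel_du d_psi by (intro cong_add cong_mult_right)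
  also have "\<dots> = (smul s (gen U * gen D) + (poly_h phi + psi_rh)) * gen D"
    by (simp add: distrib_right add.assoc)
  also have "\<dots> = (smul s W + phi1_h) * gen D"
    unfolding phi_decomposition by (simp add: W_def add_ac)
  also have "\<dots> \<approx> (smul s W + smul (s * C) (gen H ^ j)) * gen D"
    by (intro cong_mult_right cong_add cong_refl phi1_cong)
  finally show ?thesis .
qed

lemma W_h: "W * gen H \<approx> gen H * W"
proof -
  have psi_h_comm: "psi_h * gen H = gen H * psi_h"
    by (simp only: psi_h_def sum_distrib_left sum_distrib_right smul_mult_left smul_mult_right
        power_commutes)
  have "W * gen H = gen U * (gen D * gen H) + psi_h * gen H"
    unfolding W_def by (simp only: distrib_right mult.assoc)
  also have "\<dots> \<approx> gen U * smul r (gen H * gen D) + psi_h * gen H"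
    by (intro cong_add cong_mult_left rel_dh cong_refl)
  also have "\<dots> = smul r (gen U * gen H) * gen D + gen H * psi_h"
    by (simp add: mult.assoc psi_h_comm)
  also have "\<dots> \<approx> (gen H * gen U) * gen D + gen H * psi_h"
    by (intro cong_add cong_mult_right cong_sym[OF rel_hu] cong_refl)
  also have "\<dots> = gen H * W" unfolding W_def by (simp only: distrib_left mult.assoc)
  finally show ?thesis .
qed

text \<open>Multiplying by h^(n-j) turns the factor s into r^(n-j) s = 1: Z u = u Z + C u h^n,
  Z d = d Z - C d h^n and Z h = h Z.\<close>
lemma r_power_complement: "r ^ (n - j) * s = 1"
  using j_less r_order by (simp add: s_eq flip: power_add)

lemma Z_u: "Z * gen U \<approx> gen U * Z + smul C (gen U * gen H ^ n)"
proof -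
  have "Z * gen U = W * (gen H ^ (n - j) * gen U)" by (simp add: Z_def mult.assoc)
  also have "\<dots> \<approx> W * smul (r ^ (n - j)) (gen U * gen H ^ (n - j))"
    by (intro cong_mult_left hpower_u)
  also have "\<dots> = smul (r ^ (n - j)) ((W * gen U) * gen H ^ (n - j))" by (simp add: mult.assoc)
  also have "\<dots> \<approx> smul (r ^ (n - j))
      ((gen U * (smul s W + smul (s * C) (gen H ^ j))) * gen H ^ (n - j))"
    by (intro cong_smul cong_mult_right W_u)
  also have "\<dots> = smul (r ^ (n - j) * s) (gen U * Z)
      + smul (r ^ (n - j) * s * C) (gen U * (gen H ^ j * gen H ^ (n - j)))"
    by (simp add: Z_def algebra_simps)
  also have "\<dots> = gen U * Z + smul C (gen U * gen H ^ n)"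
    using j_less by (simp add: r_power_complement flip: power_add)
  finally show ?thesis .
qed

lemma Z_d: "Z * gen D \<approx> gen D * Z + smul (- C) (gen D * gen H ^ n)"
proof -
  have "gen D * Z = (gen D * W) * gen H ^ (n - j)" by (simp add: Z_def mult.assoc)
  also have "\<dots> \<approx> (smul s W + smul (s * C) (gen H ^ j)) * (gen D * gen H ^ (n - j))"
    unfolding mult.assoc[symmetric] by (intro cong_mult_right d_W)
  also have "\<dots> \<approx> (smul s W + smul (s * C) (gen H ^ j))
                 * smul (r ^ (n - j)) (gen H ^ (n - j) * gen D)"
    by (intro cong_mult_left d_hpower)
  also have "\<dots> = smul (r ^ (n - j) * s) (Z * gen D)
      + smul (r ^ (n - j) * s * C) ((gen H ^ j * gen H ^ (n - j)) * gen D)"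
    by (simp add: Z_def algebra_simps)
  also have "\<dots> = Z * gen D + smul C (gen H ^ n * gen D)"
    using j_less by (simp add: r_power_complement flip: power_add)
  finally have D_Z: "gen D * Z - smul C (gen H ^ n * gen D) \<approx> Z * gen D"
    by (simp add: cong_def algebra_simps)
  have hn_d: "gen H ^ n * gen D \<approx> gen D * gen H ^ n"
    using cong_sym[OF d_hpower[of n]] r_order by simp
  have "gen D * Z - smul C (gen D * gen H ^ n) \<approx> gen D * Z - smul C (gen H ^ n * gen D)"
    by (intro cong_diff cong_refl cong_smul cong_sym[OF hn_d])
  also have "\<dots> \<approx> Z * gen D" by (rule D_Z)
  finally have "gen D * Z - smul C (gen D * gen H ^ n) \<approx> Z * gen D" .
  from cong_sym[OF this] show ?thesis by (simp add: smul_uminus_left)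
qed

lemma Z_h: "Z * gen H \<approx> gen H * Z"
proof -
  have "Z * gen H = (W * gen H) * gen H ^ (n - j)" by (simp only: Z_def mult.assoc power_commutes)
  also have "\<dots> \<approx> (gen H * W) * gen H ^ (n - j)" by (intro cong_mult_right W_h)
  also have "\<dots> = gen H * Z" by (simp add: Z_def mult.assoc)
  finally show ?thesis .
qed

text \<open>h^n is central modulo the ideal, since r^n = 1.\<close>
lemma hn_central: "gen H ^ n * wmon w \<approx> wmon w * gen H ^ n"
proof -
  have "(r powi wdeg w) ^ n = (r ^ n) powi wdeg w"
    by (simp add: power_int_power' power_int_power mult.commute)
  then show ?thesis using hcomm_power[OF homogeneous_wmon[of w], of n] r_order by simp
qed

lemma Z_wmon: "Z * wmon w \<approx> wmon w * (Z + smul (of_int (wdeg w) * C) (gen H ^ n))"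
proof (induction w)
  case (Cons g w)
  have Z_gen: "Z * gen g \<approx> gen g * Z + smul (of_int (wdeg [g]) * C) (gen g * gen H ^ n)"
    using Z_u Z_d Z_h by (cases g) simp_all
  have "Z * wmon (g # w) = (Z * gen g) * wmon w" by (simp add: wmon_Cons[of g w] mult.assoc)
  also have "\<dots> \<approx> (gen g * Z + smul (of_int (wdeg [g]) * C) (gen g * gen H ^ n)) * wmon w"
    by (intro cong_mult_right Z_gen)
  also have "\<dots> = gen g * (Z * wmon w) + smul (of_int (wdeg [g]) * C) (gen g * (gen H ^ n * wmon w))"
    by (simp add: algebra_simps)
  also have "\<dots> \<approx> gen g * (wmon w * (Z + smul (of_int (wdeg w) * C) (gen H ^ n)))
       + smul (of_int (wdeg [g]) * C) (gen g * (wmon w * gen H ^ n))"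
    by (intro cong_add cong_mult_left cong_smul Cons.IH hn_central)
  also have "\<dots> = wmon (g # w) * (Z + smul (of_int (wdeg (g # w)) * C) (gen H ^ n))"
  proof -
    have "of_int (wdeg (g # w)) * C = of_int (wdeg [g]) * C + of_int (wdeg w) * C"
      by (simp add: wdeg_Cons[of g w] distrib_right)
    then show ?thesis
      by (simp add: wmon_Cons[of g w] smul_add_left distrib_left mult.assoc add_ac)
  qed
  finally show ?case .
qed (simp add: wmon_Nil)

lemma Z_homogeneous:
  assumes "homogeneous i y" shows "Z * y \<approx> y * (Z + smul (of_int i * C) (gen H ^ n))"
proof (rule cong_homogeneous[OF assms])
  fix w :: "gen list" assume "wdeg w = i"
  then show "Z * wmon w \<approx> wmon w * (Z + smul (of_int i * C) (gen H ^ n))"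
    using Z_wmon[of w] by simp
qed

text \<open>Case o(r) = n: the commutator with Z has eigenvalue i C on the component of degree i
  (up to the factor h^n), and these eigenvalues are distinct since C \<noteq> 0.\<close>
lemma finite_order_case:
  assumes "x \<in> J"
  shows "\<exists>m. \<forall>i. hc i x * gen H ^ m \<in> J"
proof -
  have Z_hn: "(gen H ^ n) ^ k * Z \<approx> Z * (gen H ^ n) ^ k" for k
    using cong_commute_power[OF cong_sym[OF Z_h], of "n * k"] by (simp add: power_mult)
  have "hc i x * (gen H ^ n) ^ card (wdeg ` supp x) \<in> J" for i
  proof (rule eigen_separation[where T = "\<lambda>a. Z * a - a * Z" and lam = "\<lambda>i. of_int i * C"])
    fix i y k assume y: "homogeneous i y"
    have "Z * (y * (gen H ^ n) ^ k) - y * (gen H ^ n) ^ k * Z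
        = (Z * y) * (gen H ^ n) ^ k - y * ((gen H ^ n) ^ k * Z)" by (simp add: mult.assoc)
    also have "\<dots> \<approx> (y * (Z + smul (of_int i * C) (gen H ^ n))) * (gen H ^ n) ^ k
                    - y * (Z * (gen H ^ n) ^ k)"
      by (intro cong_diff cong_mult_right cong_mult_left Z_homogeneous y Z_hn)
    also have "\<dots> = smul (of_int i * C) (y * (gen H ^ n) ^ Suc k)"
      by (simp add: algebra_simps)
    finally show "Z * (y * (gen H ^ n) ^ k) - y * (gen H ^ n) ^ k * Z
                  \<approx> smul (of_int i * C) (y * (gen H ^ n) ^ Suc k)" .
  next
    show "inj (\<lambda>i. of_int i * C)" using C_nonzero by (auto simp: inj_def)
  qed (use assms in \<open>auto simp: algebra_simps intro: diff_mem mult_left_mem mult_right_mem\<close>)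
  then show ?thesis by (metis power_mult)
qed

end

section \<open>From ideals of L to ideals of the free algebra\<close>

text \<open>Non-conformality forces s = r^i: otherwise psi with coefficients a_i / (s - r^i)
  solves s psi(x) - psi(r x) = phi(x).\<close>
lemma nonconformal_power:
  assumes "\<not> conformal phi r s" shows "\<exists>i. s = r ^ i"
proof (rule ccontr)
  assume ne: "\<not> (\<exists>i. s = r ^ i)"
  define psi where "psi = Poly (map (\<lambda>i. coeff phi i / (s - r ^ i)) [0..<degree phi + 1])"
  have coeff_psi: "coeff psi i = (if i \<le> degree phi then coeff phi i / (s - r ^ i) else 0)" for i
    by (auto simp: psi_def nth_default_def simp del: upt_Suc)
  have "smult s psi - pcompose psi [:0, r:] = phi"
  proof (rule poly_eqI)
    fix i
    have "coeff (smult s psi - pcompose psi [:0, r:]) i = s * coeff psi i - r ^ i * coeff psi i"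
      by (simp add: coeff_pcompose_linear)
    also have "\<dots> = coeff psi i * (s - r ^ i)" by (simp add: algebra_simps)
    also have "\<dots> = coeff phi i"
      using ne by (cases "i \<le> degree phi") (auto simp: coeff_psi coeff_eq_0)
    finally show "coeff (smult s psi - pcompose psi [:0, r:]) i = coeff phi i" .
  qed
  then show False using assms by (auto simp: conformal_def)
qed

definition alg_ideal_of :: "fa set \<Rightarrow> free_alg set" where
  "alg_ideal_of I = {a. coeff_fn a \<in> I}"

lemma alg_ideal_of: "two_sided_ideal I \<Longrightarrow> alg_ideal (alg_ideal_of I)"
  unfolding alg_ideal_def ring_ideal_def two_sided_ideal_def alg_ideal_of_def
  by (auto simp: zero_free_alg.rep_eq plus_free_alg.rep_eq times_free_alg.rep_eq coeff_fn[simplified])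

lemma coeff_fn_poly_h_power:
  assumes n: "n > 0" and "degree p \<le> B"
  shows "coeff_fn (\<Sum>m\<le>B. smul (coeff p m) (gen H ^ (m * n))) = evalHpow p n"
proof
  fix w :: "gen list"
  have replicate_iff: "w = replicate k H \<longleftrightarrow> (\<forall>g\<in>set w. g = H) \<and> length w = k" for k
    by (metis in_set_replicate length_replicate replicate_length_same)
  have "coeff_fn (\<Sum>m\<le>B. smul (coeff p m) (gen H ^ (m * n))) w
      = (\<Sum>m\<le>B. if m = length w div n \<and> (\<forall>g\<in>set w. g = H) \<and> n dvd length w
                then coeff p m else 0)"
    unfolding coeff_fn_sum coeff_fn_smul gen_H_power wmon.rep_eq mon_def replicate_iff
    using n by (intro sum.cong) auto
  also have "\<dots> = evalHpow p n w"
  proof (cases "(\<forall>g\<in>set w. g = H) \<and> n dvd length w")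
    case True
    then show ?thesis
      using assms(2) by (cases "length w div n \<le> B") (auto simp: evalHpow_def sum.delta' coeff_eq_0)
  next
    case False
    then show ?thesis unfolding evalHpow_def by (intro trans[OF sum.neutral]) auto
  qed
  finally show "coeff_fn (\<Sum>m\<le>B. smul (coeff p m) (gen H ^ (m * n))) w = evalHpow p n w" .
qed

lemma coeff_fn_poly_h: "coeff_fn (poly_h p) = evalH p"
  using coeff_fn_poly_h_power[of 1 p "degree p"] by (simp add: poly_h_def evalH_def)

lemma coeff_fn_wmon_mult: "coeff_fn (wmon a * wmon b) = mon (a @ b)"
  by (simp add: times_free_alg.rep_eq wmon.rep_eq fmul_mon_mon)

lemma downup_relations:
  assumes "downup_ideal phi r s I" "r \<noteq> 0"
  shows "twisted_h (alg_ideal_of I) r"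
    and "ring_ideal.cong (alg_ideal_of I) (gen D * gen U) (smul s (gen U * gen D) + poly_h phi)"
proof -
  have ideal: "alg_ideal (alg_ideal_of I)"
    using assms(1) alg_ideal_of by (simp add: downup_ideal_def)
  interpret alg_ideal "alg_ideal_of I" by (rule ideal)
  \<comment> \<open>the infix syntax of the locale is not inherited here, so cong is written out\<close>
  have rels: "downup_rels phi r s \<subseteq> I" using assms(1) by (simp add: downup_ideal_def)
  have hu: "ring_ideal.cong (alg_ideal_of I) (gen H * gen U) (smul r (gen U * gen H))"
    and dh: "ring_ideal.cong (alg_ideal_of I) (gen D * gen H) (smul r (gen H * gen D))"
    using rels unfolding cong_def
    by (simp_all add: downup_rels_def alg_ideal_of_def minus_free_alg.rep_eq smul.rep_eq
        coeff_fn_wmon_mult)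
  show "twisted_h (alg_ideal_of I) r"
    by (rule twisted_h.intro[OF ideal twisted_h_axioms.intro[OF assms(2) hu dh]])
  show "ring_ideal.cong (alg_ideal_of I) (gen D * gen U) (smul s (gen U * gen D) + poly_h phi)"
    using rels unfolding cong_def
    by (simp add: downup_rels_def alg_ideal_of_def diff_diff_eq[symmetric]
        minus_free_alg.rep_eq smul.rep_eq coeff_fn_wmon_mult coeff_fn_poly_h)
qed

lemma phi_tilde_relation:
  assumes "alg_ideal (alg_ideal_of I)" "n > 0"
    and "fsub (evalHpow (phi_tilde phi s n j) n) (fscale C fone) \<in> I"
  shows "ring_ideal.cong (alg_ideal_of I)
           (\<Sum>m\<le>degree phi. smul (coeff phi (j + m * n) / s) (gen H ^ (m * n))) (smul C 1)"
proof -
  interpret alg_ideal "alg_ideal_of I" by fact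
  define pt where "pt = phi_tilde phi s n j"
  have coeff_pt: "coeff pt m = (if m \<le> degree phi then coeff phi (j + m * n) / s else 0)" for m
    by (auto simp: pt_def phi_tilde_def nth_default_def simp del: upt_Suc)
  have "degree pt \<le> degree phi" by (rule degree_le) (auto simp: coeff_pt)
  moreover have "(\<Sum>m\<le>degree phi. smul (coeff phi (j + m * n) / s) (gen H ^ (m * n)))
               = (\<Sum>m\<le>degree phi. smul (coeff pt m) (gen H ^ (m * n)))"
    by (intro sum.cong) (auto simp: coeff_pt)
  ultimately show ?thesis using assms(2,3) unfolding pt_def cong_def
    by (simp add: alg_ideal_of_def minus_free_alg.rep_eq smul.rep_eq
        one_free_alg.rep_eq coeff_fn_poly_h_power)
qed

lemma finite_order_of_ideal:
  assumes "downup_ideal phi r s I" "r \<noteq> 0"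
    and "n > 0" "r ^ n = 1" "\<forall>k. 0 < k \<and> k < n \<longrightarrow> r ^ k \<noteq> 1" "j < n" "s = r ^ j"
    and "C \<noteq> 0" "fsub (evalHpow (phi_tilde phi s n j) n) (fscale C fone) \<in> I"
  shows "finite_order (alg_ideal_of I) r s phi n j C"
proof -
  have twisted: "twisted_h (alg_ideal_of I) r" by (rule downup_relations(1)[OF assms(1,2)])
  show ?thesis
  proof (intro finite_order.intro[OF twisted] finite_order_axioms.intro)
    show "ring_ideal.cong (alg_ideal_of I) (gen D * gen U) (smul s (gen U * gen D) + poly_h phi)"
      by (rule downup_relations(2)[OF assms(1,2)])
    show "ring_ideal.cong (alg_ideal_of I)
            (\<Sum>m\<le>degree phi. smul (coeff phi (j + m * n) / s) (gen H ^ (m * n))) (smul C 1)"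
      by (rule phi_tilde_relation[OF twisted_h.axioms(1)[OF twisted] assms(3,9)])
  qed (use assms(3-8) in auto)
qed

lemma coeff_fn_hc_hpow:
  "fin x \<Longrightarrow> fmul (hcomp i x) (hpow m) = coeff_fn (hc i (alg x) * gen H ^ m)"
  by (simp add: times_free_alg.rep_eq hc.rep_eq alg_inverse gen_H_power wmon.rep_eq hpow_def)

lemma root_of_unity_order:
  fixes r :: complex
  assumes "\<exists>n>0. r ^ n = 1" "s = r ^ i"
  obtains n j where "n > 0" "r ^ n = 1" "\<forall>k. 0 < k \<and> k < n \<longrightarrow> r ^ k \<noteq> 1" "j < n" "s = r ^ j"
proof -
  define n where "n = (LEAST n. n > 0 \<and> r ^ n = 1)"
  have n: "n > 0" "r ^ n = 1" using LeastI_ex[OF assms(1)] by (auto simp: n_def)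
  have minimal: "\<forall>k. 0 < k \<and> k < n \<longrightarrow> r ^ k \<noteq> 1" using not_less_Least by (auto simp: n_def)
  have "s = r ^ (n * (i div n) + i mod n)" using assms(2) by simp
  also have "\<dots> = (r ^ n) ^ (i div n) * r ^ (i mod n)" by (simp only: power_add power_mult)
  finally show ?thesis using that[OF n minimal, of "i mod n"] n by simp
qed

theorem mainTheorem16:
  fixes phi :: "complex poly" and r s :: complex and I :: "fa set" and x :: fa
  assumes "r \<noteq> 0" and "s \<noteq> 0"
    and "\<not> conformal phi r s"
    and "downup_ideal phi r s I"
    and "\<And>n j. \<lbrakk> n > 0; r ^ n = 1; \<forall>k. 0 < k \<and> k < n \<longrightarrow> r ^ k \<noteq> 1; j < n; s = r ^ j \<rbrakk>
           \<Longrightarrow> \<exists>C. C \<noteq> 0 \<and> fsub (evalHpow (phi_tilde phi s n j) n) (fscale C fone) \<in> I"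
    and "x \<in> I"
  shows "\<exists>m::nat. \<forall>i::int. fmul (hcomp i x) (hpow m) \<in> I"
proof -
  define J where "J = alg_ideal_of I"
  interpret twisted_h J r using downup_relations(1)[OF assms(4,1)] by (simp add: J_def)
  have "fin x" using assms(4,6) by (auto simp: downup_ideal_def two_sided_ideal_def)
  then have x_mem: "alg x \<in> J" using assms(6) by (simp add: J_def alg_ideal_of_def alg_inverse)
  have "\<exists>m. \<forall>i. hc i (alg x) * gen H ^ m \<in> J"
  proof (cases "\<exists>n>0. r ^ n = 1")
    case False
    then show ?thesis using infinite_order_case x_mem by blast
  next
    case True
    obtain i where "s = r ^ i" using nonconformal_power[OF assms(3)] by blast
    then obtain n j where order: "n > 0" "r ^ n = 1" "\<forall>k. 0 < k \<and> k < n \<longrightarrow> r ^ k \<noteq> 1"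
        "j < n" "s = r ^ j"
      using root_of_unity_order[OF True] by blast
    obtain C where C: "C \<noteq> 0" "fsub (evalHpow (phi_tilde phi s n j) n) (fscale C fone) \<in> I"
      using assms(5)[OF order] by blast
    interpret finite_order J r s phi n j C
      unfolding J_def by (rule finite_order_of_ideal[OF assms(4,1) order C])
    show ?thesis using finite_order_case x_mem by blast
  qed
  then obtain m where "\<forall>i. hc i (alg x) * gen H ^ m \<in> J" by blast
  then have "\<forall>i. fmul (hcomp i x) (hpow m) \<in> I"
    using \<open>fin x\<close> by (simp add: J_def alg_ideal_of_def coeff_fn_hc_hpow)
  then show ?thesis ..
qed

end
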